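(* Let $\mathcal{T}=(V,E,L)$ be a trellis of length $n$ with labels in $\mathbb{Q}[\Sigma]$, and let $v\neq v'$ be two vertices lying in the same layer $V_j$ with $1\le j\le n-1$ that are mergeable, i.e. $$\mathcal{P}(v)\mathcal{F}(v)+\mathcal{P}(v')\mathcal{F}(v')=\mathcal{P}(v)\mathcal{F}(v')+\mathcal{P}(v')\mathcal{F}(v)\quad\text{in }\mathbb{Q}[\Sigma^+].$$ Let $\mathcal{T}^*=(V^*,E^*,L^* )$ be the trellis obtained by merging $v$ and $v'$. Then $\mathcal{C}(\mathcal{T}^* )=\mathcal{C}(\mathcal{T})$.
   Context: $\Sigma$ is a finite alphabet, $\Sigma^+$ is the semigroup of nonempty finite strings over $\Sigma$ under concatenation, and $\mathbb{Q}[\Sigma^+]$ is its semigroup algebra over $\mathbb{Q}$: finite formal sums $\sum a_{\boldsymbol\sigma}\boldsymbol\sigma$ with $a_{\boldsymbol\sigma}\in\mathbb{Q}$, with multiplication given by concatenation extended bilinearly. $\mathbb{Q}[\Sigma]\subseteq\mathbb{Q}[\Sigma^+]$ denotes the formal $\mathbb{Q}$-linear combinations of single symbols. A trellis $\mathcal{T}=(V,E,L)$ of length $n$ is a directed graph whose vertex set is partitioned as $V=V_0\cup\dots\cup V_n$, with $V_0=\{\mathrm{root}\}$, $V_n=\{\mathrm{toor}\}$, every edge going from some $V_{j-1}$ to $V_j$ ($j\in[n]$), together with an edge-labelling $L:E\to\mathbb{Q}[\Sigma]$; extend $L$ to $V\times V$ by $L(u,w)=0$ if $(u,w)\notin E$.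 The label of a path is the product (in $\mathbb{Q}[\Sigma^+]$) of its edge labels in order. $\mathcal{C}(\mathcal{T})\in\mathbb{Q}[\Sigma^+]$ is the sum of the labels of all root-to-toor paths (this encodes the multiset of path label strings). For a vertex $w$, the past $\mathcal{P}(w)$ is the sum of labels of all paths from the root to $w$ and the future $\mathcal{F}(w)$ is the sum of labels of all paths from $w$ to the toor. Merging $v,v'\in V_j$: set $V^*=(V\setminus\{v,v'\})\cup\{v^*\}$ with $v^*\in V^*_j$; keep every edge $(w,w')$ of $E$ with $w,w'\notin\{v,v'\}$ with the same label; for every $w\in V_{j-1}$ put $L^*(w,v^* )=L(w,v)+L(w,v')$; for every $w\in V_{j+1}$ put $L^*(v^*,w)=\tfrac12\big(L(v,w)+L(v',w)\big)$ (edges with label $0$ are regarded as absent). *)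

theory Defs
  imports Complex_Main "HOL-Library.Function_Algebras"
begin

text \<open>Elements of the semigroup algebra Q[Sigma^+] are represented as coefficient
functions on strings (lists over the alphabet). All elements occurring here have finite
support and vanish on the empty string; the embedding of Q[Sigma^+] into the monoid
algebra Q[Sigma^*] is injective and multiplicative, so equalities are the same.\<close>

type_synonym 's alg = "'s list \<Rightarrow> rat"

definition conv :: "'s alg \<Rightarrow> 's alg \<Rightarrow> 's alg" where
  "conv f g = (\<lambda>w. \<Sum>i\<le>length w. f (take i w) * g (drop i w))"

definition in_QSigma :: "'s alg \<Rightarrow> bool" where
  "in_QSigma f \<longleftrightarrow> (\<forall>w. f w \<noteq> 0 \<longrightarrow> length w = 1)"

text \<open>A trellis of length n: layers V 0, ..., V n (finite, pairwise disjoint),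
V 0 = {rt}, V n = {tr}; labels L u w (0 meaning: no edge) are in Q[Sigma]
and nonzero only from some layer j-1 to layer j, j in [n].\<close>

definition trellis :: "nat \<Rightarrow> (nat \<Rightarrow> 'v set) \<Rightarrow> ('v \<Rightarrow> 'v \<Rightarrow> 's alg) \<Rightarrow> 'v \<Rightarrow> 'v \<Rightarrow> bool" where
  "trellis n V L rt tr \<longleftrightarrow>
     (\<forall>j\<le>n. finite (V j)) \<and>
     (\<forall>i\<le>n. \<forall>j\<le>n. i \<noteq> j \<longrightarrow> V i \<inter> V j = {}) \<and>
     V 0 = {rt} \<and> V n = {tr} \<and>
     (\<forall>u w. L u w \<noteq> 0 \<longrightarrow> (\<exists>j\<in>{1..n}. u \<in> V (j - 1) \<and> w \<in> V j)) \<and>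
     (\<forall>u w. in_QSigma (L u w))"

fun plab :: "('v \<Rightarrow> 'v \<Rightarrow> 's alg) \<Rightarrow> 'v list \<Rightarrow> 's alg" where
  "plab L (x # y # []) = L x y"
| "plab L (x # y # z # zs) = conv (L x y) (plab L (y # z # zs))"
| "plab L _ = (\<lambda>_. 0)"

definition psum :: "(nat \<Rightarrow> 'v set) \<Rightarrow> ('v \<Rightarrow> 'v \<Rightarrow> 's alg) \<Rightarrow> 'v \<Rightarrow> 'v \<Rightarrow> nat \<Rightarrow> nat \<Rightarrow> 's alg" where
  "psum V L a b i k =
     (\<Sum>xs\<in>{xs. length xs = Suc (k - i) \<and> (\<forall>t\<le>k - i. xs ! t \<in> V (i + t))
               \<and> hd xs = a \<and> last xs = b}. plab L xs)"

definition code :: "nat \<Rightarrow> (nat \<Rightarrow> 'v set) \<Rightarrow> ('v \<Rightarrow> 'v \<Rightarrow> 's alg) \<Rightarrow> 'v \<Rightarrow> 'v \<Rightarrow> 's alg" where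
  "code n V L rt tr = psum V L rt tr 0 n"

definition past :: "(nat \<Rightarrow> 'v set) \<Rightarrow> ('v \<Rightarrow> 'v \<Rightarrow> 's alg) \<Rightarrow> 'v \<Rightarrow> nat \<Rightarrow> 'v \<Rightarrow> 's alg" where
  "past V L rt j w = psum V L rt w 0 j"

definition future :: "nat \<Rightarrow> (nat \<Rightarrow> 'v set) \<Rightarrow> ('v \<Rightarrow> 'v \<Rightarrow> 's alg) \<Rightarrow> 'v \<Rightarrow> nat \<Rightarrow> 'v \<Rightarrow> 's alg" where
  "future n V L tr j w = psum V L w tr j n"

text \<open>Merging v, v' in layer j: the merged vertex v* is None, other vertices a are Some a.\<close>

definition merge_V :: "(nat \<Rightarrow> 'v set) \<Rightarrow> nat \<Rightarrow> 'v \<Rightarrow> 'v \<Rightarrow> nat \<Rightarrow> 'v option set" where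
  "merge_V V j v v' i = Some ` (V i - {v, v'}) \<union> (if i = j then {None} else {})"

definition merge_L :: "(nat \<Rightarrow> 'v set) \<Rightarrow> ('v \<Rightarrow> 'v \<Rightarrow> 's alg) \<Rightarrow> nat \<Rightarrow> 'v \<Rightarrow> 'v
      \<Rightarrow> 'v option \<Rightarrow> 'v option \<Rightarrow> 's alg" where
  "merge_L V L j v v' x y =
     (case (x, y) of
        (Some a, Some b) \<Rightarrow> if a \<notin> {v, v'} \<and> b \<notin> {v, v'} then L a b else (\<lambda>_. 0)
      | (Some a, None) \<Rightarrow> if a \<in> V (j - 1) then (\<lambda>w. L a v w + L a v' w) else (\<lambda>_. 0)
      | (None, Some b) \<Rightarrow> if b \<in> V (j + 1) then (\<lambda>w. (1/2) * (L v b w + L v' b w)) else (\<lambda>_. 0)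
      | (None, None) \<Rightarrow> (\<lambda>_. 0))"

end

theory Submission
  imports Defs
begin

text \<open>Every root-to-toor path passes through exactly one vertex u of the layer V j, so
  C(T) is the sum over u of P(u) F(u). Merging v and v' changes neither the pasts nor the
  futures of the other vertices of V j; the merged vertex has past P(v) + P(v') and future
  (F(v) + F(v'))/2, so it contributes (P(v) + P(v'))(F(v) + F(v'))/2, and by mergeability this
  equals the former contribution P(v) F(v) + P(v') F(v').\<close>

subsection \<open>Convolution\<close>

lemma conv_zero_left: "conv 0 g = 0"
  by (simp add: conv_def fun_eq_iff)

lemma conv_zero_right: "conv f 0 = 0"
  by (simp add: conv_def fun_eq_iff)

lemma conv_add_left: "conv (f + g) h = conv f h + conv g h"
  by (rule ext) (simp add: conv_def distrib_right sum.distrib)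

lemma conv_add_right: "conv f (g + h) = conv f g + conv f h"
  by (rule ext) (simp add: conv_def distrib_left sum.distrib)

lemma conv_sum_left: "conv (\<Sum>a\<in>A. f a) g = (\<Sum>a\<in>A. conv (f a) g)"
proof (induction A rule: infinite_finite_induct)
  case (insert x F)
  then show ?case by (metis sum.insert conv_add_left)
qed (simp_all add: conv_def)

lemma conv_sum_right: "conv f (\<Sum>a\<in>A. g a) = (\<Sum>a\<in>A. conv f (g a))"
proof (induction A rule: infinite_finite_induct)
  case (insert x F)
  then show ?case by (metis sum.insert conv_add_right)
qed (simp_all add: conv_def)

lemma conv_scale_left: "conv ((\<lambda>_. c) * f) g = (\<lambda>_. c) * conv f g"
  by (rule ext) (simp add: conv_def sum_distrib_left mult.assoc)

lemma conv_scale_right: "conv f ((\<lambda>_. c) * g) = (\<lambda>_. c) * conv f g"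
  by (rule ext) (simp add: conv_def sum_distrib_left algebra_simps)

lemma conv_assoc: "conv (conv f g) h = conv f (conv g h)"
proof (rule ext)
  fix w :: "'a list"
  define n where "n = length w"
  define G where "G = (\<lambda>p q. f (take p w) * g (take q (drop p w)) * h (drop (p + q) w))"
  have "conv (conv f g) h w = (\<Sum>k\<le>n. \<Sum>p\<le>k. G p (k - p))"
    unfolding conv_def n_def[symmetric] G_def
    by (rule sum.cong[OF refl]) (simp add: sum_distrib_right n_def min_def take_drop)
  also have "\<dots> = (\<Sum>(p, q)\<in>{(p, q). p + q \<le> n}. G p q)"
    by (rule sum.triangle_reindex_eq[symmetric])
  also have "{(p, q). p + q \<le> n} = Sigma {..n} (\<lambda>p. {..n - p})"
    by auto
  also have "(\<Sum>(p, q)\<in>Sigma {..n} (\<lambda>p. {..n - p}). G p q) = (\<Sum>p\<le>n. \<Sum>q\<le>n - p. G p q)"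
    by (rule sum.Sigma[symmetric]) auto
  also have "\<dots> = conv f (conv g h) w"
    unfolding conv_def n_def[symmetric] G_def
    by (rule sum.cong[OF refl]) (simp add: sum_distrib_left n_def add.commute mult.assoc)
  finally show "conv (conv f g) h w = conv f (conv g h) w" .
qed

lemma conv_average_eq:
  assumes "conv p f + conv p' f' = conv p f' + conv p' f"
  shows "conv (p + p') ((\<lambda>_. 1/2) * (f + f')) = conv p f + conv p' f'"
proof -
  have "conv (p + p') (f + f') = (conv p f + conv p' f') + (conv p f + conv p' f')"
    using assms by (simp add: conv_add_left conv_add_right algebra_simps)
  then show ?thesis
    by (simp add: conv_scale_right fun_eq_iff)
qed

subsection \<open>Paths\<close>

lemma plab_snoc: "2 \<le> length xs \<Longrightarrow> plab L (xs @ [b]) = conv (plab L xs) (L (last xs) b)"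
  by (induction L xs rule: plab.induct) (auto simp: conv_assoc)

lemma plab_map:
  assumes "\<forall>t. Suc t < length xs \<longrightarrow> M (f (xs ! t)) (f (xs ! Suc t)) = L (xs ! t) (xs ! Suc t)"
  shows "plab M (map f xs) = plab L xs"
  using assms
proof (induction L xs rule: plab.induct)
  case (2 L x y z zs)
  then have "M (f x) (f y) = L x y" by fastforce
  moreover have "plab M (map f (y # z # zs)) = plab L (y # z # zs)"
    using "2.prems" by (intro "2.IH") fastforce
  ultimately show ?case by simp
qed auto

definition paths :: "(nat \<Rightarrow> 'v set) \<Rightarrow> 'v \<Rightarrow> 'v \<Rightarrow> nat \<Rightarrow> nat \<Rightarrow> 'v list set" where
  "paths V a b i k = {xs. length xs = Suc (k - i) \<and> (\<forall>t\<le>k - i. xs ! t \<in> V (i + t))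
     \<and> hd xs = a \<and> last xs = b}"

lemma psum_paths: "psum V L a b i k = (\<Sum>xs\<in>paths V a b i k. plab L xs)"
  unfolding psum_def paths_def ..

lemma mem_paths_iff:
  "xs \<in> paths V a b i k \<longleftrightarrow> length xs = Suc (k - i) \<and> (\<forall>t\<le>k - i. xs ! t \<in> V (i + t))
     \<and> xs ! 0 = a \<and> xs ! (k - i) = b"
  unfolding paths_def by (cases "xs = []") (auto simp: hd_conv_nth last_conv_nth)

lemma finite_paths:
  assumes "i \<le> k" "\<forall>t\<in>{i..k}. finite (V t)"
  shows "finite (paths V a b i k)"
proof (rule finite_subset)
  show "paths V a b i k \<subseteq> {xs. set xs \<subseteq> (\<Union>t\<in>{i..k}. V t) \<and> length xs = Suc (k - i)}"
  proof (rule subsetI, intro CollectI conjI)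
    fix xs assume xs: "xs \<in> paths V a b i k"
    then show "length xs = Suc (k - i)"
      by (simp add: mem_paths_iff)
    show "set xs \<subseteq> (\<Union>t\<in>{i..k}. V t)"
    proof
      fix x assume "x \<in> set xs"
      then obtain t where "t < length xs" "x = xs ! t"
        by (auto simp: in_set_conv_nth)
      then show "x \<in> (\<Union>t\<in>{i..k}. V t)"
        using xs assms(1) by (intro UN_I[of "i + t"]) (auto simp: mem_paths_iff less_Suc_eq_le)
    qed
  qed
  show "finite {xs. set xs \<subseteq> (\<Union>t\<in>{i..k}. V t) \<and> length xs = Suc (k - i)}"
    using assms by (intro finite_lists_length_eq) auto
qed

lemma paths_step: "paths V a b i (Suc i) = (if a \<in> V i \<and> b \<in> V (Suc i) then {[a, b]} else {})"
proof -
  have "xs \<in> paths V a b i (Suc i) \<longleftrightarrow> a \<in> V i \<and> b \<in> V (Suc i) \<and> xs = [a, b]" for xs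
  proof
    assume "xs \<in> paths V a b i (Suc i)"
    then have "length xs = 2" "xs ! 0 = a" "xs ! 1 = b" "a \<in> V i" "b \<in> V (Suc i)"
      by (auto simp: mem_paths_iff)
    then show "a \<in> V i \<and> b \<in> V (Suc i) \<and> xs = [a, b]"
      by (auto simp: numeral_2_eq_2 length_Suc_conv)
  qed (auto simp: mem_paths_iff le_Suc_eq)
  then show ?thesis by auto
qed

lemma paths_snoc:
  assumes "i < k" "b \<in> V (Suc k)"
  shows "paths V a b i (Suc k) = (\<lambda>xs. xs @ [b]) ` (\<Union>u\<in>V k. paths V a u i k)"
proof (intro set_eqI iffI)
  fix xs assume xs: "xs \<in> paths V a b i (Suc k)"
  then have len: "length xs = Suc (Suc k - i)" and last: "xs ! (Suc k - i) = b"
    by (simp_all add: mem_paths_iff)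
  define ys where "ys = butlast xs"
  have "xs = ys @ [b]"
    using len last unfolding ys_def
    by (metis append_butlast_last_id last_conv_nth diff_Suc_1 list.size(3) nat.distinct(1))
  moreover have "ys \<in> paths V a (ys ! (k - i)) i k"
    using xs assms unfolding ys_def by (auto simp: mem_paths_iff nth_butlast)
  moreover have "ys ! (k - i) \<in> V k"
  proof -
    have "xs ! (k - i) \<in> V (i + (k - i))"
      using xs by (simp add: mem_paths_iff)
    then show ?thesis
      using assms len by (simp add: ys_def nth_butlast)
  qed
  ultimately show "xs \<in> (\<lambda>xs. xs @ [b]) ` (\<Union>u\<in>V k. paths V a u i k)"
    by (intro rev_image_eqI[of ys] UN_I)
next
  fix xs assume "xs \<in> (\<lambda>xs. xs @ [b]) ` (\<Union>u\<in>V k. paths V a u i k)"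
  then obtain u ys where "u \<in> V k" "ys \<in> paths V a u i k" "xs = ys @ [b]"
    by blast
  then show "xs \<in> paths V a b i (Suc k)"
    using assms unfolding mem_paths_iff
    by (auto simp: nth_append Suc_diff_le less_Suc_eq_le le_Suc_eq)
qed

lemma paths_map:
  assumes "i \<le> k" and "inj f"
    and "\<forall>t. i < t \<and> t < k \<longrightarrow> W t = f ` V t"
    and "f a \<in> W i \<longleftrightarrow> a \<in> V i" and "f b \<in> W k \<longleftrightarrow> b \<in> V k"
  shows "paths W (f a) (f b) i k = map f ` paths V a b i k"
proof (intro set_eqI iffI)
  fix xs assume xs: "xs \<in> paths W (f a) (f b) i k"
  have image: "xs ! t \<in> f ` V (i + t)" if t: "t \<le> k - i" for t
  proof -
    have "xs ! t \<in> W (i + t)"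
      using xs t by (simp add: mem_paths_iff)
    consider "t = 0" | "t = k - i" | "0 < t" "t < k - i"
      using t by linarith
    then show ?thesis
      using \<open>xs ! t \<in> W (i + t)\<close> xs t assms(1,4,5) assms(3)[rule_format, of "i + t"]
      by cases (auto simp: mem_paths_iff)
  qed
  have preimage: "inv f (xs ! t) \<in> V (i + t) \<and> f (inv f (xs ! t)) = xs ! t" if "t \<le> k - i" for t
    using image[OF that] assms(2) by auto
  have "xs = map f (map (inv f) xs)"
    using preimage xs by (auto simp: mem_paths_iff list_eq_iff_nth_eq less_Suc_eq_le)
  moreover have "map (inv f) xs \<in> paths V a b i k"
    using preimage xs assms(2) by (auto simp: mem_paths_iff)
  ultimately show "xs \<in> map f ` paths V a b i k"
    by (rule image_eqI)
next
  fix xs assume "xs \<in> map f ` paths V a b i k"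
  then obtain ys where ys: "ys \<in> paths V a b i k" and xs: "xs = map f ys"
    by blast
  have "f (ys ! t) \<in> W (i + t)" if t: "t \<le> k - i" for t
  proof -
    have "ys ! t \<in> V (i + t)"
      using ys t by (simp add: mem_paths_iff)
    consider "t = 0" | "t = k - i" | "0 < t" "t < k - i"
      using t by linarith
    then show ?thesis
      using \<open>ys ! t \<in> V (i + t)\<close> ys t assms(1,4,5) assms(3)[rule_format, of "i + t"]
      by cases (auto simp: mem_paths_iff)
  qed
  then show "xs \<in> paths W (f a) (f b) i k"
    using ys unfolding xs by (auto simp: mem_paths_iff)
qed

subsection \<open>Sums of path labels\<close>

lemma psum_step: "psum V L a b i (Suc i) = (if a \<in> V i \<and> b \<in> V (Suc i) then L a b else 0)"
  by (simp add: psum_paths paths_step)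

lemma psum_outside:
  assumes "i \<le> k" "b \<notin> V k"
  shows "psum V L a b i k = 0"
proof -
  have "paths V a b i k = {}"
    using assms by (force simp: mem_paths_iff)
  then show ?thesis
    by (simp add: psum_paths)
qed

lemma psum_snoc:
  assumes "i < k" "b \<in> V (Suc k)" "\<forall>t\<in>{i..k}. finite (V t)"
  shows "psum V L a b i (Suc k) = (\<Sum>u\<in>V k. conv (psum V L a u i k) (L u b))"
proof -
  have "psum V L a b i (Suc k) = (\<Sum>xs\<in>(\<Union>u\<in>V k. paths V a u i k). plab L (xs @ [b]))"
    unfolding psum_paths paths_snoc[where V = V and a = a, OF assms(1,2)]
    by (simp add: sum.reindex inj_on_def)
  also have "\<dots> = (\<Sum>u\<in>V k. \<Sum>xs\<in>paths V a u i k. plab L (xs @ [b]))"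
    using assms by (intro sum.UNION_disjoint) (auto simp: finite_paths mem_paths_iff)
  also have "\<dots> = (\<Sum>u\<in>V k. \<Sum>xs\<in>paths V a u i k. conv (plab L xs) (L u b))"
  proof (intro sum.cong refl)
    fix u xs assume "xs \<in> paths V a u i k"
    then have "2 \<le> length xs" "last xs = u"
      using assms(1) by (auto simp: paths_def)
    then show "plab L (xs @ [b]) = conv (plab L xs) (L u b)"
      by (simp add: plab_snoc)
  qed
  also have "\<dots> = (\<Sum>u\<in>V k. conv (psum V L a u i k) (L u b))"
    by (simp add: psum_paths conv_sum_left)
  finally show ?thesis .
qed

lemma psum_split:
  assumes "i < m" "m < k" "\<forall>t\<in>{i..k}. finite (V t)"
  shows "psum V L a b i k = (\<Sum>u\<in>V m. conv (psum V L a u i m) (psum V L u b m k))"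
proof -
  have "Suc m \<le> k"
    using assms(2) by simp
  then show ?thesis
    using assms(3)
  proof (induction k arbitrary: b rule: dec_induct)
    case base
    show ?case
    proof (cases "b \<in> V (Suc m)")
      case True
      then show ?thesis
        using base assms(1) by (simp add: psum_snoc psum_step)
    next
      case False
      then have "psum V L a b i (Suc m) = 0" "\<And>u. psum V L u b m (Suc m) = 0"
        using assms(1) by (simp_all add: psum_outside)
      then show ?thesis
        by (simp only: conv_zero_right sum.neutral_const)
    qed
  next
    case (step k)
    show ?case
    proof (cases "b \<in> V (Suc k)")
      case True
      have fin: "\<forall>t\<in>{i..k}. finite (V t)" "\<forall>t\<in>{m..k}. finite (V t)"
        using step.prems assms(1) by auto
      have "psum V L a b i (Suc k) = (\<Sum>w\<in>V k. conv (psum V L a w i k) (L w b))"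
        using True step.hyps assms(1) fin by (simp add: psum_snoc)
      also have "\<dots> = (\<Sum>w\<in>V k. \<Sum>u\<in>V m. conv (psum V L a u i m) (conv (psum V L u w m k) (L w b)))"
        using step.IH fin by (simp add: conv_sum_left conv_assoc)
      also have "\<dots> = (\<Sum>u\<in>V m. conv (psum V L a u i m) (\<Sum>w\<in>V k. conv (psum V L u w m k) (L w b)))"
        by (subst sum.swap) (simp add: conv_sum_right)
      also have "\<dots> = (\<Sum>u\<in>V m. conv (psum V L a u i m) (psum V L u b m (Suc k)))"
        using True step.hyps fin by (simp add: psum_snoc)
      finally show ?thesis .
    next
      case False
      then have "psum V L a b i (Suc k) = 0" "\<And>u. psum V L u b m (Suc k) = 0"
        using step.hyps assms(1) by (simp_all add: psum_outside)
      then show ?thesis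
        by (simp only: conv_zero_right sum.neutral_const)
    qed
  qed
qed

lemma psum_cons:
  assumes "Suc i < k" "\<forall>t\<in>{i..k}. finite (V t)"
  shows "psum V L a b i k
       = (if a \<in> V i then (\<Sum>u\<in>V (Suc i). conv (L a u) (psum V L u b (Suc i) k)) else 0)"
  using psum_split[of i "Suc i" k V L a b] assms by (simp add: psum_step conv_zero_left)

lemma psum_map:
  assumes "i \<le> k" and "inj f"
    and "\<forall>t. i < t \<and> t < k \<longrightarrow> W t = f ` V t"
    and "f a \<in> W i \<longleftrightarrow> a \<in> V i" and "f b \<in> W k \<longleftrightarrow> b \<in> V k"
    and "\<forall>t x y. f x \<in> W t \<and> f y \<in> W (Suc t) \<longrightarrow> M (f x) (f y) = L x y"
  shows "psum W M (f a) (f b) i k = psum V L a b i k"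
proof -
  have "psum W M (f a) (f b) i k = (\<Sum>xs\<in>paths V a b i k. plab M (map f xs))"
    unfolding psum_paths paths_map[OF assms(1-5)]
    using assms(2) by (simp add: sum.reindex inj_on_def inj_map_eq_map)
  also have "\<dots> = psum V L a b i k"
    unfolding psum_paths
  proof (intro sum.cong refl plab_map allI impI)
    fix xs t assume "xs \<in> paths V a b i k" "Suc t < length xs"
    then have "map f xs \<in> paths W (f a) (f b) i k" "Suc t \<le> k - i"
      unfolding paths_map[OF assms(1-5)] by (auto simp: mem_paths_iff)
    then have "f (xs ! t) \<in> W (i + t)" "f (xs ! Suc t) \<in> W (Suc (i + t))"
      unfolding mem_paths_iff by auto
    then show "M (f (xs ! t)) (f (xs ! Suc t)) = L (xs ! t) (xs ! Suc t)"
      using assms(6) by blast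
  qed
  finally show ?thesis .
qed

lemma code_split:
  assumes "0 < j" "j < n" "\<forall>t\<in>{0..n}. finite (V t)"
  shows "code n V L rt tr = (\<Sum>u\<in>V j. conv (past V L rt j u) (future n V L tr j u))"
  unfolding code_def past_def future_def using assms by (rule psum_split)

subsection \<open>Merging two vertices\<close>

lemma Some_in_merge_V: "Some u \<in> merge_V V j v v' t \<longleftrightarrow> u \<in> V t \<and> u \<notin> {v, v'}"
  by (auto simp: merge_V_def)

lemma None_in_merge_V: "None \<in> merge_V V j v v' t \<longleftrightarrow> t = j"
  by (simp add: merge_V_def)

lemma merge_L_Some_Some: "a \<notin> {v, v'} \<Longrightarrow> b \<notin> {v, v'} \<Longrightarrow> merge_L V L j v v' (Some a) (Some b) = L a b"
  by (simp add: merge_L_def)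

lemma merge_L_Some_None: "a \<in> V (j - 1) \<Longrightarrow> merge_L V L j v v' (Some a) None = L a v + L a v'"
  by (simp add: merge_L_def plus_fun_def)

lemma merge_L_None_Some:
  "b \<in> V (Suc j) \<Longrightarrow> merge_L V L j v v' None (Some b) = (\<lambda>_. 1/2) * (L v b + L v' b)"
  by (simp add: merge_L_def times_fun_def plus_fun_def)

locale trellis_merge =
  fixes n j :: nat and V :: "nat \<Rightarrow> 'v set" and L :: "'v \<Rightarrow> 'v \<Rightarrow> 's alg" and rt tr v v' :: 'v
  assumes trellis: "trellis n V L rt tr"
    and inner_layer: "0 < j" "j < n"
    and merged: "v \<in> V j" "v' \<in> V j" "v \<noteq> v'"
begin

abbreviation W where "W \<equiv> merge_V V j v v'"
abbreviation M where "M \<equiv> merge_L V L j v v'"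

lemma finite_layers: "\<forall>t\<in>{0..n}. finite (V t)"
  using trellis by (simp add: trellis_def)

lemma finite_merged_layers: "\<forall>t\<in>{0..n}. finite (W t)"
  using finite_layers by (simp add: merge_V_def)

lemma merged_notin_other_layer: "t \<le> n \<Longrightarrow> t \<noteq> j \<Longrightarrow> v \<notin> V t \<and> v' \<notin> V t"
  using trellis merged inner_layer unfolding trellis_def by (metis disjoint_iff less_imp_le)

lemma merge_V_other_layer: "t \<le> n \<Longrightarrow> t \<noteq> j \<Longrightarrow> W t = Some ` V t"
  using merged_notin_other_layer by (auto simp: merge_V_def)

lemma root_tail_unmerged: "rt \<in> V 0" "rt \<notin> {v, v'}" "tr \<in> V n" "tr \<notin> {v, v'}"
  using trellis merged_notin_other_layer[of 0] merged_notin_other_layer[of n] inner_layer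
  by (auto simp: trellis_def)

lemma psum_merge_Some:
  assumes "i \<le> k" "k \<le> n" "j \<notin> {i<..<k}" "a \<notin> {v, v'}" "b \<notin> {v, v'}"
  shows "psum W M (Some a) (Some b) i k = psum V L a b i k"
proof (rule psum_map)
  show "\<forall>t. i < t \<and> t < k \<longrightarrow> W t = Some ` V t"
    using assms(2,3) merge_V_other_layer by force
  show "\<forall>t x y. Some x \<in> W t \<and> Some y \<in> W (Suc t) \<longrightarrow> M (Some x) (Some y) = L x y"
    by (simp add: Some_in_merge_V merge_L_Some_Some)
qed (use assms in \<open>simp_all add: Some_in_merge_V\<close>)

lemma past_merge_Some: "u \<in> V j - {v, v'} \<Longrightarrow> past W M (Some rt) j (Some u) = past V L rt j u"
  unfolding past_def using inner_layer root_tail_unmerged by (intro psum_merge_Some) auto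

lemma future_merge_Some: "u \<in> V j - {v, v'} \<Longrightarrow> future n W M (Some tr) j (Some u) = future n V L tr j u"
  unfolding future_def using inner_layer root_tail_unmerged by (intro psum_merge_Some) auto

lemma past_merge_None: "past W M (Some rt) j None = past V L rt j v + past V L rt j v'"
proof (cases "j = 1")
  case True
  then show ?thesis
    using root_tail_unmerged merged
    by (simp add: past_def psum_step Some_in_merge_V None_in_merge_V merge_L_Some_None)
next
  case False
  then obtain i where j: "j = Suc i" and "0 < i"
    using inner_layer by (metis One_nat_def Suc_pred neq0_conv)
  have fin: "\<forall>t\<in>{0..i}. finite (V t)" "\<forall>t\<in>{0..i}. finite (W t)"
    using finite_layers finite_merged_layers inner_layer j by auto
  have past: "psum W M (Some rt) (Some a) 0 i = psum V L rt a 0 i" if "a \<in> V i" for a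
    using that j inner_layer root_tail_unmerged merged_notin_other_layer[of i]
    by (intro psum_merge_Some) auto
  have layer_i: "W i = Some ` V i"
    using j inner_layer by (intro merge_V_other_layer) auto
  have edge_i: "M (Some a) None = L a v + L a v'" if "a \<in> V i" for a
    using that j by (intro merge_L_Some_None) simp
  have "past W M (Some rt) j None = (\<Sum>x\<in>W i. conv (psum W M (Some rt) x 0 i) (M x None))"
    unfolding past_def
    using psum_snoc[where V = W and L = M and a = "Some rt" and i = 0 and k = i, folded j]
      \<open>0 < i\<close> fin
    by (simp add: None_in_merge_V)
  also have "\<dots> = (\<Sum>a\<in>V i. conv (psum V L rt a 0 i) (L a v + L a v'))"
    using layer_i edge_i past by (simp add: sum.reindex)
  also have "\<dots> = past V L rt j v + past V L rt j v'"
    unfolding past_def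
    using psum_snoc[where V = V and L = L and a = rt and i = 0 and k = i, folded j]
      \<open>0 < i\<close> fin merged
    by (simp add: conv_add_right sum.distrib)
  finally show ?thesis .
qed

lemma future_merge_None:
  "future n W M (Some tr) j None = (\<lambda>_. 1/2) * (future n V L tr j v + future n V L tr j v')"
proof (cases "Suc j = n")
  case True
  then show ?thesis
    using root_tail_unmerged merged
    by (auto simp: future_def psum_step Some_in_merge_V None_in_merge_V merge_L_None_Some)
next
  case False
  then have "Suc j < n"
    using inner_layer by simp
  have fin: "\<forall>t\<in>{j..n}. finite (V t)" "\<forall>t\<in>{j..n}. finite (W t)"
    using finite_layers finite_merged_layers by auto
  have future: "psum W M (Some b) (Some tr) (Suc j) n = psum V L b tr (Suc j) n" if "b \<in> V (Suc j)" for b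
    using that \<open>Suc j < n\<close> root_tail_unmerged merged_notin_other_layer[of "Suc j"]
    by (intro psum_merge_Some) auto
  have "future n W M (Some tr) j None
      = (\<Sum>x\<in>W (Suc j). conv (M None x) (psum W M x (Some tr) (Suc j) n))"
    unfolding future_def using \<open>Suc j < n\<close> fin by (simp add: psum_cons None_in_merge_V)
  also have "\<dots> = (\<Sum>b\<in>V (Suc j). conv ((\<lambda>_. 1/2) * (L v b + L v' b)) (psum V L b tr (Suc j) n))"
    using \<open>Suc j < n\<close> by (simp add: merge_V_other_layer sum.reindex future merge_L_None_Some)
  also have "\<dots> = (\<lambda>_. 1/2) * (future n V L tr j v + future n V L tr j v')"
    unfolding future_def using \<open>Suc j < n\<close> fin merged
    by (simp add: psum_cons conv_scale_left conv_add_left sum.distrib sum_distrib_left distrib_left)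
  finally show ?thesis .
qed

lemma code_merge:
  defines "P \<equiv> past V L rt j" and "F \<equiv> future n V L tr j"
  shows "code n W M (Some rt) (Some tr) + conv (P v) (F v) + conv (P v') (F v')
       = code n V L rt tr + conv (P v + P v') ((\<lambda>_. 1/2) * (F v + F v'))"
proof -
  define rest where "rest = (\<Sum>u\<in>V j - {v, v'}. conv (P u) (F u))"
  have fin: "finite (V j - {v, v'})"
    using finite_layers inner_layer by simp
  have "W j = insert None (Some ` (V j - {v, v'}))"
    by (auto simp: merge_V_def)
  then have "code n W M (Some rt) (Some tr) = conv (P v + P v') ((\<lambda>_. 1/2) * (F v + F v')) + rest"
    using inner_layer finite_merged_layers fin
    by (simp add: code_split sum.reindex past_merge_None future_merge_None
        past_merge_Some future_merge_Some P_def F_def rest_def)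
  moreover have "V j = insert v (insert v' (V j - {v, v'}))"
    using merged by auto
  then have "code n V L rt tr = (\<Sum>u\<in>insert v (insert v' (V j - {v, v'})). conv (P u) (F u))"
    using inner_layer finite_layers by (simp add: code_split P_def F_def)
  then have "code n V L rt tr = conv (P v) (F v) + conv (P v') (F v') + rest"
    using fin merged by (simp add: rest_def add.assoc)
  ultimately show ?thesis
    by (simp add: algebra_simps)
qed

end

theorem proposition1:
  fixes n j :: nat and V :: "nat \<Rightarrow> 'v set" and L :: "'v \<Rightarrow> 'v \<Rightarrow> ('s::finite) alg"
    and rt tr v v' :: 'v
  assumes "trellis n V L rt tr"
    and "1 \<le> j" and "j \<le> n - 1"
    and "v \<in> V j" and "v' \<in> V j" and "v \<noteq> v'"
    and "(\<lambda>w. conv (past V L rt j v) (future n V L tr j v) w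
             + conv (past V L rt j v') (future n V L tr j v') w)
       = (\<lambda>w. conv (past V L rt j v) (future n V L tr j v') w
             + conv (past V L rt j v') (future n V L tr j v) w)"
  shows "code n (merge_V V j v v') (merge_L V L j v v') (Some rt) (Some tr)
       = code n V L rt tr"
proof -
  interpret trellis_merge n j V L rt tr v v'
    using assms(1-6) by unfold_locales auto
  have "conv (past V L rt j v + past V L rt j v') ((\<lambda>_. 1/2) * (future n V L tr j v + future n V L tr j v'))
      = conv (past V L rt j v) (future n V L tr j v) + conv (past V L rt j v') (future n V L tr j v')"
    using assms(7) by (intro conv_average_eq) (simp only: plus_fun_def)
  then show ?thesis
    using code_merge by simp
qed

end
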